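(* Let $1\le\nu<\infty$, let $\phi(z)=az+b$ with $0<|a|<1$, $b\in\mathbb{C}$, and let $w$ be an entire function, not identically zero, such that $W_{w,\phi}$ is a compact operator on $\mathcal{F}^\nu$. Then the point spectrum of $W_{w,\phi}$ consists of simple eigenvalues.
   Context: For $1\le\nu<\infty$, $\mathcal{F}^\nu$ is the space of entire functions $f$ with $\|f\|_\nu:=\left(\frac{\nu}{2\pi}\int_{\mathbb{C}}|f(z)|^\nu e^{-\nu|z|^2/2}\,dm(z)\right)^{1/\nu}<\infty$. $W_{w,\phi}f=w\,(f\circ\phi)$. *)

theory Defs
  imports "HOL-Analysis.Analysis"
begin

definition fock_space :: "real \<Rightarrow> (complex \<Rightarrow> complex) set" where
  "fock_space \<nu> = {f. f holomorphic_on UNIV \<and>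
     (\<integral>\<^sup>+ z. ennreal (norm (f z) powr \<nu> * exp (- \<nu> * norm z ^ 2 / 2)) \<partial>lborel) < \<infinity>}"

definition fock_norm :: "real \<Rightarrow> (complex \<Rightarrow> complex) \<Rightarrow> real" where
  "fock_norm \<nu> f = ((\<nu> / (2 * pi)) *
     (\<integral> z. norm (f z) powr \<nu> * exp (- \<nu> * norm z ^ 2 / 2) \<partial>lborel)) powr (1 / \<nu>)"

definition wcomp :: "(complex \<Rightarrow> complex) \<Rightarrow> (complex \<Rightarrow> complex) \<Rightarrow>
    (complex \<Rightarrow> complex) \<Rightarrow> (complex \<Rightarrow> complex)" where
  "wcomp w \<phi> f = (\<lambda>z. w z * f (\<phi> z))"

definition fock_compact_op :: "real \<Rightarrow> ((complex \<Rightarrow> complex) \<Rightarrow> (complex \<Rightarrow> complex)) \<Rightarrow> bool" where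
  "fock_compact_op \<nu> T \<longleftrightarrow>
     (\<forall>f\<in>fock_space \<nu>. T f \<in> fock_space \<nu>) \<and>
     (\<forall>fs :: nat \<Rightarrow> complex \<Rightarrow> complex. \<forall>M.
        (\<forall>n. fs n \<in> fock_space \<nu> \<and> fock_norm \<nu> (fs n) \<le> M) \<longrightarrow>
        (\<exists>r g. strict_mono r \<and> g \<in> fock_space \<nu> \<and>
           (\<lambda>n. fock_norm \<nu> (\<lambda>z. T (fs (r n)) z - g z)) \<longlonglongrightarrow> 0))"

end

theory Submission
  imports Defs "HOL-Complex_Analysis.Complex_Analysis"
begin

text \<open>Let \<open>z\<^sub>0\<close> be the fixed point of \<open>\<phi>(z) = a z + b\<close>. Differentiating the eigenvalue
  equation \<open>w \<cdot> (g \<circ> \<phi>) = l g\<close> \<open>n\<close> times at \<open>z\<^sub>0\<close> (Leibniz rule, \<open>\<phi>' = a\<close>) gives a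
  triangular linear system for the Taylor coefficients of \<open>g\<close> at \<open>z\<^sub>0\<close> with diagonal entries
  \<open>l - w(z\<^sub>0) a\<^sup>n\<close>. For a nonzero eigenfunction \<open>f\<close> the first nonvanishing coefficient, of
  index \<open>m\<close>, forces \<open>l = w(z\<^sub>0) a\<^sup>m\<close>; as \<open>l \<noteq> 0\<close> (entire functions have no zero divisors) and \<open>0 < |a| < 1\<close>, all other diagonal
  entries are nonzero. Hence an eigenfunction is determined by its \<open>m\<close>-th coefficient, so the
  eigenspace is spanned by \<open>f\<close>.\<close>

lemma entire_mult_eq_0_imp_eq_0:
  fixes f g :: "complex \<Rightarrow> complex"
  assumes "f holomorphic_on UNIV" "g holomorphic_on UNIV" "f \<noteq> (\<lambda>_. 0)"
    and "\<And>z. f z * g z = 0"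
  shows "g = (\<lambda>_. 0)"
proof -
  obtain z1 where "f z1 \<noteq> 0" using assms(3) by auto
  then obtain e where "e > 0" and f_nz: "\<forall>y. dist z1 y < e \<longrightarrow> f y \<noteq> 0"
    using continuous_at_avoid holomorphic_on_imp_continuous_on assms(1)
    by (metis continuous_on_eq_continuous_at open_UNIV UNIV_I)
  have "g z = 0" for z
  proof (rule analytic_continuation_open[of "ball z1 e" UNIV g "\<lambda>_. 0"])
    show "\<And>u. u \<in> ball z1 e \<Longrightarrow> g u = 0"
      using f_nz assms(4) by (metis mem_ball mult_eq_0_iff)
  qed (use \<open>e > 0\<close> assms(2) in auto)
  then show ?thesis by auto
qed

lemma holomorphic_on_compose_affine:
  fixes f :: "complex \<Rightarrow> complex"
  assumes "f holomorphic_on UNIV"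
  shows "(\<lambda>z. f (a * z + b)) holomorphic_on UNIV"
proof -
  have "(f \<circ> (\<lambda>z. a * z + b)) holomorphic_on UNIV"
    by (rule holomorphic_on_compose_gen[of _ UNIV _ UNIV]) (auto intro!: holomorphic_intros assms)
  then show ?thesis by (simp add: o_def)
qed

lemma higher_deriv_eigenfunction_at_fixed_point:
  fixes w g :: "complex \<Rightarrow> complex"
  assumes "w holomorphic_on UNIV" "g holomorphic_on UNIV"
    and fixed: "a * z\<^sub>0 + b = z\<^sub>0"
    and eigen: "\<And>z. w z * g (a * z + b) = l * g z"
  shows "(l - w z\<^sub>0 * a ^ n) * (deriv ^^ n) g z\<^sub>0 =
           (\<Sum>i<n. of_nat (n choose i) * a ^ i * (deriv ^^ i) g z\<^sub>0 * (deriv ^^ (n - i)) w z\<^sub>0)"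
proof -
  have "(\<lambda>z. g (a * z + b) * w z) = (\<lambda>z. l * g z)"
    using eigen by (simp add: mult.commute)
  then have "l * (deriv ^^ n) g z\<^sub>0 = (deriv ^^ n) (\<lambda>z. g (a * z + b) * w z) z\<^sub>0"
    using higher_deriv_cmult[OF assms(2)] by simp
  also have "\<dots> = (\<Sum>i = 0..n. of_nat (n choose i) * (a ^ i * (deriv ^^ i) g z\<^sub>0)
                               * (deriv ^^ (n - i)) w z\<^sub>0)"
    using higher_deriv_mult[OF holomorphic_on_compose_affine[OF assms(2)] assms(1)]
      higher_deriv_compose_linear'[OF assms(2) open_UNIV open_UNIV UNIV_I]
    by (simp add: fixed)
  also have "\<dots> = (\<Sum>i<n. of_nat (n choose i) * a ^ i * (deriv ^^ i) g z\<^sub>0 * (deriv ^^ (n - i)) w z\<^sub>0)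
                  + w z\<^sub>0 * a ^ n * (deriv ^^ n) g z\<^sub>0"
    by (simp add: atLeast0AtMost lessThan_Suc_atMost[symmetric] mult_ac)
  finally show ?thesis by (simp add: algebra_simps)
qed

lemma higher_deriv_eigenfunction_first_nonzero:
  fixes w g :: "complex \<Rightarrow> complex"
  assumes "w holomorphic_on UNIV" "g holomorphic_on UNIV"
    and "a * z\<^sub>0 + b = z\<^sub>0"
    and "\<And>z. w z * g (a * z + b) = l * g z"
    and "\<And>i. i < n \<Longrightarrow> (deriv ^^ i) g z\<^sub>0 = 0"
  shows "(l - w z\<^sub>0 * a ^ n) * (deriv ^^ n) g z\<^sub>0 = 0"
proof -
  have "(\<Sum>i<n. of_nat (n choose i) * a ^ i * (deriv ^^ i) g z\<^sub>0 * (deriv ^^ (n - i)) w z\<^sub>0) = 0"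
    by (rule sum.neutral) (simp add: assms(5))
  with higher_deriv_eigenfunction_at_fixed_point[of w g a z\<^sub>0 b l n] assms(1-4) show ?thesis
    by simp
qed

lemma eigenvalue_eq_at_first_nonzero_higher_deriv:
  fixes w f :: "complex \<Rightarrow> complex"
  assumes "w holomorphic_on UNIV" "f holomorphic_on UNIV" "f \<noteq> (\<lambda>_. 0)"
    and "a * z\<^sub>0 + b = z\<^sub>0"
    and "\<And>z. w z * f (a * z + b) = l * f z"
  obtains m where "(deriv ^^ m) f z\<^sub>0 \<noteq> 0" "l = w z\<^sub>0 * a ^ m"
proof -
  have "\<exists>n. (deriv ^^ n) f z\<^sub>0 \<noteq> 0"
    using assms(3) holomorphic_fun_eq_0_on_connected[OF assms(2) open_UNIV connected_UNIV]
    by blast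
  define m where "m = (LEAST n. (deriv ^^ n) f z\<^sub>0 \<noteq> 0)"
  have m: "(deriv ^^ m) f z\<^sub>0 \<noteq> 0"
    unfolding m_def by (rule LeastI_ex) fact
  have "(deriv ^^ i) f z\<^sub>0 = 0" if "i < m" for i
    using not_less_Least[OF that[unfolded m_def]] by simp
  then have "(l - w z\<^sub>0 * a ^ m) * (deriv ^^ m) f z\<^sub>0 = 0"
    using higher_deriv_eigenfunction_first_nonzero[of w f a z\<^sub>0 b l m] assms(1,2,4,5) by blast
  with m show ?thesis
    by (intro that) auto
qed

lemma eigenfunction_eq_0_if_higher_deriv_eq_0:
  fixes w g :: "complex \<Rightarrow> complex"
  assumes "w holomorphic_on UNIV" "g holomorphic_on UNIV"
    and "a * z\<^sub>0 + b = z\<^sub>0"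
    and "\<And>z. w z * g (a * z + b) = l * g z"
    and simple: "\<And>n. n \<noteq> m \<Longrightarrow> l \<noteq> w z\<^sub>0 * a ^ n"
    and "(deriv ^^ m) g z\<^sub>0 = 0"
  shows "g = (\<lambda>_. 0)"
proof -
  have "(deriv ^^ n) g z\<^sub>0 = 0" for n
  proof (induction n rule: less_induct)
    case (less n)
    show ?case
    proof (cases "n = m")
      case False
      have "(l - w z\<^sub>0 * a ^ n) * (deriv ^^ n) g z\<^sub>0 = 0"
        using higher_deriv_eigenfunction_first_nonzero[of w g a z\<^sub>0 b l n] assms less.IH
        by blast
      with simple[OF False] show ?thesis by simp
    qed (use assms(6) in simp)
  qed
  then show ?thesis
    using holomorphic_fun_eq_0_on_connected[OF assms(2) open_UNIV connected_UNIV] by auto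
qed

lemma affine_eigenvalue_nonzero:
  fixes w f :: "complex \<Rightarrow> complex"
  assumes "a \<noteq> 0"
    and w: "w holomorphic_on UNIV" "w \<noteq> (\<lambda>_. 0)"
    and f: "f holomorphic_on UNIV" "f \<noteq> (\<lambda>_. 0)" "\<And>z. w z * f (a * z + b) = l * f z"
  shows "l \<noteq> 0"
proof
  assume "l = 0"
  then have "(\<lambda>z. f (a * z + b)) = (\<lambda>_. 0)"
    using entire_mult_eq_0_imp_eq_0[OF w(1) holomorphic_on_compose_affine[OF f(1)] w(2)] f(3)
    by simp
  then have "f (a * ((z - b) / a) + b) = 0" for z
    by (rule fun_cong)
  with \<open>a \<noteq> 0\<close> have "f z = 0" for z
    by simp
  with f(2) show False by auto
qed

lemma affine_eigenfunctions_proportional: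
  fixes w f g :: "complex \<Rightarrow> complex"
  assumes "0 < norm a" "norm a < 1"
    and w: "w holomorphic_on UNIV" "w \<noteq> (\<lambda>_. 0)"
    and f: "f holomorphic_on UNIV" "f \<noteq> (\<lambda>_. 0)" "\<And>z. w z * f (a * z + b) = l * f z"
    and g: "g holomorphic_on UNIV" "\<And>z. w z * g (a * z + b) = l * g z"
  shows "\<exists>c. g = (\<lambda>z. c * f z)"
proof -
  define z\<^sub>0 where "z\<^sub>0 = b / (1 - a)"
  have "a \<noteq> 0" "1 - a \<noteq> 0"
    using assms(1,2) by auto
  then have fixed: "a * z\<^sub>0 + b = z\<^sub>0"
    by (simp add: z\<^sub>0_def field_simps)
  have "l \<noteq> 0"
    using affine_eigenvalue_nonzero[OF \<open>a \<noteq> 0\<close> w f] .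
  obtain m where m: "(deriv ^^ m) f z\<^sub>0 \<noteq> 0" and l_eq: "l = w z\<^sub>0 * a ^ m"
    using eigenvalue_eq_at_first_nonzero_higher_deriv[of w f a z\<^sub>0 b l] w(1) f fixed by blast
  have simple: "l \<noteq> w z\<^sub>0 * a ^ n" if "n \<noteq> m" for n
  proof
    assume "l = w z\<^sub>0 * a ^ n"
    then have "norm a ^ n = norm a ^ m"
      using l_eq \<open>l \<noteq> 0\<close> by (simp flip: norm_power)
    with that assms(1,2) show False by (simp add: power_inject_exp')
  qed
  define c where "c = (deriv ^^ m) g z\<^sub>0 / (deriv ^^ m) f z\<^sub>0"
  have "(\<lambda>z. g z - c * f z) = (\<lambda>_. 0)"
  proof (rule eigenfunction_eq_0_if_higher_deriv_eq_0[OF w(1) _ fixed _ simple])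
    show "(\<lambda>z. g z - c * f z) holomorphic_on UNIV"
      using f(1) g(1) by (auto intro!: holomorphic_intros)
    show "w z * (g (a * z + b) - c * f (a * z + b)) = l * (g z - c * f z)" for z
      using f(3)[of z] g(2)[of z] by (simp add: algebra_simps)
    have "(deriv ^^ m) (\<lambda>z. g z - c * f z) z\<^sub>0 = (deriv ^^ m) g z\<^sub>0 - c * (deriv ^^ m) f z\<^sub>0"
      using f(1) g(1)
      by (simp add: higher_deriv_diff[of _ UNIV] higher_deriv_cmult[of _ UNIV] holomorphic_intros)
    then show "(deriv ^^ m) (\<lambda>z. g z - c * f z) z\<^sub>0 = 0"
      using m by (simp add: c_def)
  qed
  then have "g = (\<lambda>z. c * f z)"
    by (simp add: fun_eq_iff)
  then show ?thesis ..
qed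

theorem theorem3p5:
  fixes \<nu> :: real and a b :: complex and w :: "complex \<Rightarrow> complex"
  assumes "1 \<le> \<nu>"
    and "0 < norm a" and "norm a < 1"
    and "w holomorphic_on UNIV"
    and "w \<noteq> (\<lambda>_. 0)"
    and "fock_compact_op \<nu> (wcomp w (\<lambda>z. a * z + b))"
  shows "\<forall>l f g. f \<in> fock_space \<nu> \<and> f \<noteq> (\<lambda>_. 0) \<and>
                 wcomp w (\<lambda>z. a * z + b) f = (\<lambda>z. l * f z) \<and>
                 g \<in> fock_space \<nu> \<and> wcomp w (\<lambda>z. a * z + b) g = (\<lambda>z. l * g z)
           \<longrightarrow> (\<exists>c. g = (\<lambda>z. c * f z))"
proof (intro allI impI, elim conjE)
  fix l f g
  assume f: "f \<in> fock_space \<nu>" "f \<noteq> (\<lambda>_. 0)" "wcomp w (\<lambda>z. a * z + b) f = (\<lambda>z. l * f z)"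
    and g: "g \<in> fock_space \<nu>" "wcomp w (\<lambda>z. a * z + b) g = (\<lambda>z. l * g z)"
  have "f holomorphic_on UNIV" "g holomorphic_on UNIV"
    using f(1) g(1) by (simp_all add: fock_space_def)
  moreover have "w z * f (a * z + b) = l * f z" "w z * g (a * z + b) = l * g z" for z
    using fun_cong[OF f(3), of z] fun_cong[OF g(2), of z] by (simp_all add: wcomp_def)
  ultimately show "\<exists>c. g = (\<lambda>z. c * f z)"
    using affine_eigenfunctions_proportional[OF assms(2-5)] f(2) by blast
qed

end
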